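(* Let $M$ be a finite abelian group of order $m$ and $J$ a Jacobi function on $M$. Suppose $S\subset\hat{M}$ and $i\colon S\to\hat{M}$ satisfy \[ J(\alpha,\beta)=\frac{1}{m}\sum_{x\in S}\alpha(i(x))\,\beta(i(x)x^{-1})\quad\text{for all }\alpha,\beta\in M. \] Then $S$ is closed under inversion, and $i(x)=x\,i(x^{-1})$ for all $x\in S$.
   Context: $\hat{M}$ is the Pontryagin dual of $M$, written multiplicatively; for $\alpha\in M$, $x\in\hat{M}$, $\alpha(x)$ is the value of the character $x$ at $\alpha$. $\delta(\alpha)=1$ if $\alpha=1$ and $0$ otherwise. A Jacobi function on $M$ is a function $J\colon M\times M\to\mathbf{C}$ satisfying: (A) $J(\alpha,\beta)=J(\beta,\alpha)$; (B) with $J^*(\alpha,\beta)=-\delta(\alpha)-\delta(\beta)+J(\alpha,\beta)$, $J^*(\alpha,\beta)J^*(\alpha\beta,\gamma)=J^*(\alpha,\beta\gamma)J^*(\beta,\gamma)$; (C) $\sum_{\beta\in M}J(\alpha_1\beta,\alpha_2\beta^{-1})J(\alpha_3\beta,\alpha_4\beta^{-1})=J(\alpha_1\alpha_4,\alpha_2\alpha_3)$; all for all elements of $M$. *)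

theory Defs
  imports Complex_Main
begin

text \<open>The finite abelian group M is modelled as a finite type of class ab_group_add
  (written additively: the group law a*b of the paper is a + b, the identity 1 is 0,
  and the inverse is -a).\<close>

definition characters :: "('a::{ab_group_add,finite} \<Rightarrow> complex) set" where
  "characters = {\<chi>. (\<forall>a b. \<chi> (a + b) = \<chi> a * \<chi> b) \<and> (\<forall>a. norm (\<chi> a) = 1)}"

definition char_mult :: "('a \<Rightarrow> complex) \<Rightarrow> ('a \<Rightarrow> complex) \<Rightarrow> ('a \<Rightarrow> complex)" where
  "char_mult x y = (\<lambda>a. x a * y a)"

definition char_inv :: "('a \<Rightarrow> complex) \<Rightarrow> ('a \<Rightarrow> complex)" where
  "char_inv x = (\<lambda>a. inverse (x a))"

definition kdelta :: "'a::zero \<Rightarrow> complex" where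
  "kdelta a = (if a = 0 then 1 else 0)"

definition Jstar :: "('a::zero \<Rightarrow> 'a \<Rightarrow> complex) \<Rightarrow> 'a \<Rightarrow> 'a \<Rightarrow> complex" where
  "Jstar J a b = - kdelta a - kdelta b + J a b"

definition jacobi_function :: "('a::{ab_group_add,finite} \<Rightarrow> 'a \<Rightarrow> complex) \<Rightarrow> bool" where
  "jacobi_function J \<longleftrightarrow>
     (\<forall>a b. J a b = J b a) \<and>
     (\<forall>a b c. Jstar J a b * Jstar J (a + b) c = Jstar J a (b + c) * Jstar J b c) \<and>
     (\<forall>a1 a2 a3 a4. (\<Sum>b\<in>UNIV. J (a1 + b) (a2 - b) * J (a3 + b) (a4 - b))
                     = J (a1 + a4) (a2 + a3))"

end

theory Submission
  imports Defs
begin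

text \<open>Write \<open>p\<^sub>x = i(x)\<close> and \<open>q\<^sub>x = i(x) x\<^sup>-\<^sup>1\<close>, so that \<open>m J = \<Sum>\<^sub>x\<^sub>\<in>\<^sub>S p\<^sub>x \<otimes> q\<^sub>x\<close>
  as a function on \<open>M \<times> M\<close>. Only the symmetry axiom (A) of a Jacobi function is needed:
  it says that \<open>\<Sum>\<^sub>x p\<^sub>x \<otimes> q\<^sub>x = \<Sum>\<^sub>x q\<^sub>x \<otimes> p\<^sub>x\<close>. Pairing both sides with \<open>p\<^sub>x \<otimes> q\<^sub>x\<close> and using
  orthogonality of characters counts how often the pair \<open>(p\<^sub>x, q\<^sub>x)\<close> occurs on each side;
  hence some \<open>y \<in> S\<close> has \<open>(q\<^sub>y, p\<^sub>y) = (p\<^sub>x, q\<^sub>x)\<close>. Dividing, \<open>y = x\<^sup>-\<^sup>1\<close>, and then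
  \<open>i(x) = q\<^sub>y = i(x\<^sup>-\<^sup>1) x\<close>. The sums are genuine finite sums because characters take
  values in the \<open>m\<close>-th roots of unity, so there are only finitely many of them.\<close>

lemma jacobi_function_commute: "jacobi_function J \<Longrightarrow> J a b = J b a"
  unfolding jacobi_function_def by blast

lemma character_add: "\<chi> \<in> characters \<Longrightarrow> \<chi> (a + b) = \<chi> a * \<chi> b"
  unfolding characters_def by auto

lemma norm_character: "\<chi> \<in> characters \<Longrightarrow> norm (\<chi> a) = 1"
  unfolding characters_def by auto

lemma character_nonzero: "\<chi> \<in> characters \<Longrightarrow> \<chi> a \<noteq> 0"
  using norm_character[of \<chi> a] by auto

lemma cnj_character: "\<chi> \<in> characters \<Longrightarrow> cnj (\<chi> a) = inverse (\<chi> a)"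
  using divide_conv_cnj[of "\<chi> a" 1] norm_character[of \<chi> a] by (simp add: divide_inverse)

lemma char_mult_characters:
  "\<chi> \<in> characters \<Longrightarrow> \<psi> \<in> characters \<Longrightarrow> char_mult \<chi> \<psi> \<in> characters"
  unfolding characters_def char_mult_def by (simp add: norm_mult mult_ac)

lemma char_inv_characters: "\<chi> \<in> characters \<Longrightarrow> char_inv \<chi> \<in> characters"
  unfolding characters_def char_inv_def by (simp add: norm_inverse)

lemma character_power_card:
  fixes \<chi> :: "'a::{ab_group_add,finite} \<Rightarrow> complex"
  assumes "\<chi> \<in> characters"
  shows "\<chi> a ^ card (UNIV :: 'a set) = 1"
proof -
  have "(\<Prod>b\<in>UNIV. \<chi> b) = (\<Prod>b\<in>UNIV. \<chi> (a + b))"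
    by (rule prod.reindex_bij_witness[of _ "\<lambda>b. a + b" "\<lambda>b. b - a"]) auto
  also have "\<dots> = \<chi> a ^ card (UNIV :: 'a set) * (\<Prod>b\<in>UNIV. \<chi> b)"
    by (simp add: character_add[OF assms] prod.distrib)
  finally show ?thesis
    using character_nonzero[OF assms] by simp
qed

lemma finite_characters: "finite (characters :: ('a::{ab_group_add,finite} \<Rightarrow> complex) set)"
proof (rule finite_subset)
  let ?R = "{z::complex. z ^ card (UNIV :: 'a set) = 1}"
  show "characters \<subseteq> {f. \<forall>a::'a. (a \<in> UNIV \<longrightarrow> f a \<in> ?R) \<and> (a \<notin> UNIV \<longrightarrow> f a = 0)}"
    by (auto intro: character_power_card)
  show "finite {f. \<forall>a::'a. (a \<in> UNIV \<longrightarrow> f a \<in> ?R) \<and> (a \<notin> UNIV \<longrightarrow> f a = 0)}"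
    by (intro finite_set_of_finite_funs finite_roots_unity finite_UNIV)
      (simp add: Suc_le_eq finite_UNIV_card_ge_0)
qed

lemma sum_character:
  fixes \<chi> :: "'a::{ab_group_add,finite} \<Rightarrow> complex"
  assumes "\<chi> \<in> characters"
  shows "(\<Sum>a\<in>UNIV. \<chi> a) = (if \<chi> = (\<lambda>_. 1) then of_nat (card (UNIV :: 'a set)) else 0)"
proof (cases "\<chi> = (\<lambda>_. 1)")
  case False
  then obtain c where c: "\<chi> c \<noteq> 1" by auto
  have "(\<Sum>a\<in>UNIV. \<chi> a) = (\<Sum>a\<in>UNIV. \<chi> (c + a))"
    by (rule sum.reindex_bij_witness[of _ "\<lambda>a. c + a" "\<lambda>a. a - c"]) auto
  also have "\<dots> = \<chi> c * (\<Sum>a\<in>UNIV. \<chi> a)"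
    by (simp add: character_add[OF assms] sum_distrib_left)
  finally have "(1 - \<chi> c) * (\<Sum>a\<in>UNIV. \<chi> a) = 0"
    by (simp add: algebra_simps)
  with c False show ?thesis by simp
qed simp

lemma sum_character_mult_cnj:
  fixes \<chi> \<psi> :: "'a::{ab_group_add,finite} \<Rightarrow> complex"
  assumes "\<chi> \<in> characters" "\<psi> \<in> characters"
  shows "(\<Sum>a\<in>UNIV. \<chi> a * cnj (\<psi> a)) = (if \<chi> = \<psi> then of_nat (card (UNIV :: 'a set)) else 0)"
proof -
  have "char_mult \<chi> (char_inv \<psi>) = (\<lambda>_. 1) \<longleftrightarrow> \<chi> = \<psi>"
    using character_nonzero[OF assms(2)]
    by (auto simp: char_mult_def char_inv_def fun_eq_iff field_simps)
  then show ?thesis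
    using sum_character[OF char_mult_characters[OF assms(1) char_inv_characters[OF assms(2)]]]
    by (simp add: char_mult_def char_inv_def cnj_character[OF assms(2)])
qed

lemma sum_character_products_coefficient:
  fixes p q :: "'b \<Rightarrow> 'a::{ab_group_add,finite} \<Rightarrow> complex"
  assumes "finite S" "\<forall>x\<in>S. p x \<in> characters \<and> q x \<in> characters"
    and "\<chi> \<in> characters" "\<psi> \<in> characters"
  shows "(\<Sum>a\<in>UNIV. \<Sum>b\<in>UNIV. (\<Sum>x\<in>S. p x a * q x b) * cnj (\<chi> a) * cnj (\<psi> b))
         = of_nat (card (UNIV :: 'a set) ^ 2 * card {x\<in>S. p x = \<chi> \<and> q x = \<psi>})"
proof -
  have "(\<Sum>a\<in>UNIV. \<Sum>b\<in>UNIV. (\<Sum>x\<in>S. p x a * q x b) * cnj (\<chi> a) * cnj (\<psi> b))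
      = (\<Sum>a\<in>UNIV. \<Sum>b\<in>UNIV. \<Sum>x\<in>S. (p x a * cnj (\<chi> a)) * (q x b * cnj (\<psi> b)))"
    by (simp only: sum_distrib_right) (simp add: ac_simps)
  also have "\<dots> = (\<Sum>x\<in>S. \<Sum>a\<in>UNIV. \<Sum>b\<in>UNIV. (p x a * cnj (\<chi> a)) * (q x b * cnj (\<psi> b)))"
    by (simp add: sum.swap[of _ S] sum.swap[of _ S UNIV])
  also have "\<dots> = (\<Sum>x\<in>S. (\<Sum>a\<in>UNIV. p x a * cnj (\<chi> a)) * (\<Sum>b\<in>UNIV. q x b * cnj (\<psi> b)))"
    by (simp add: sum_product)
  also have "\<dots> = (\<Sum>x\<in>S. if p x = \<chi> \<and> q x = \<psi> then of_nat (card (UNIV :: 'a set) ^ 2) else 0)"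
    using assms by (intro sum.cong refl) (simp add: sum_character_mult_cnj power2_eq_square)
  also have "\<dots> = of_nat (card (UNIV :: 'a set) ^ 2 * card {x\<in>S. p x = \<chi> \<and> q x = \<psi>})"
    using assms(1) by (simp add: sum.If_cases Int_def)
  finally show ?thesis .
qed

lemma symmetric_sum_character_products_swap:
  fixes p q :: "'b \<Rightarrow> 'a::{ab_group_add,finite} \<Rightarrow> complex"
  assumes "finite S" "\<forall>x\<in>S. p x \<in> characters \<and> q x \<in> characters"
    and "\<And>a b. (\<Sum>x\<in>S. p x a * q x b) = (\<Sum>x\<in>S. q x a * p x b)"
    and "x0 \<in> S"
  shows "\<exists>y\<in>S. q y = p x0 \<and> p y = q x0"
proof -
  have swapped: "\<forall>x\<in>S. q x \<in> characters \<and> p x \<in> characters"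
    using assms(2) by blast
  have "card {x\<in>S. p x = p x0 \<and> q x = q x0} = card {x\<in>S. q x = p x0 \<and> p x = q x0}"
    using sum_character_products_coefficient[OF assms(1,2), of "p x0" "q x0"]
      sum_character_products_coefficient[OF assms(1) swapped, of "p x0" "q x0"]
      assms(2,4) by (simp add: assms(3))
  moreover have "card {x\<in>S. p x = p x0 \<and> q x = q x0} \<noteq> 0"
    using assms(1,4) by (auto simp: card_eq_0_iff)
  ultimately have "{x\<in>S. q x = p x0 \<and> p x = q x0} \<noteq> {}"
    by (metis card.empty)
  then show ?thesis by blast
qed

lemma char_inv_eq_if_swapped_quotients:
  fixes x y u v :: "'a \<Rightarrow> complex"
  assumes "\<forall>a. x a \<noteq> 0" "\<forall>a. u a \<noteq> 0"
    and "char_mult v (char_inv y) = u" "v = char_mult u (char_inv x)"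
  shows "y = char_inv x" "u = char_mult x v"
proof -
  show "y = char_inv x"
  proof
    fix a
    have eq: "u a / x a / y a = u a"
      using fun_cong[OF assms(3), of a] by (simp add: assms(4) char_mult_def char_inv_def divide_inverse)
    then have "y a \<noteq> 0"
      using assms(2) by auto
    then have "u a = u a * (x a * y a)"
      using eq assms(1) by (simp add: field_simps)
    then show "y a = char_inv x a"
      using assms(1,2) by (simp add: char_inv_def field_simps)
  qed
  show "u = char_mult x v"
    using assms(1) by (simp add: assms(4) fun_eq_iff char_mult_def char_inv_def)
qed

theorem mainTheorem7:
  fixes J :: "'a::{ab_group_add,finite} \<Rightarrow> 'a \<Rightarrow> complex"
    and S :: "('a \<Rightarrow> complex) set"
    and i :: "('a \<Rightarrow> complex) \<Rightarrow> ('a \<Rightarrow> complex)"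
  assumes "jacobi_function J"
    and "S \<subseteq> characters"
    and "\<forall>x\<in>S. i x \<in> characters"
    and "\<forall>a b. J a b = (1 / of_nat (card (UNIV :: 'a set))) *
                (\<Sum>x\<in>S. i x a * char_mult (i x) (char_inv x) b)"
  shows "(\<forall>x\<in>S. char_inv x \<in> S) \<and> (\<forall>x\<in>S. i x = char_mult x (i (char_inv x)))"
proof -
  define q where "q x = char_mult (i x) (char_inv x)" for x
  have finite: "finite S"
    using assms(2) finite_characters finite_subset by blast
  have chars: "\<forall>x\<in>S. i x \<in> characters \<and> q x \<in> characters"
    using assms(2,3) by (auto simp: q_def intro!: char_mult_characters char_inv_characters)
  have symmetric: "(\<Sum>x\<in>S. i x a * q x b) = (\<Sum>x\<in>S. q x a * i x b)" for a b
    using jacobi_function_commute[OF assms(1), of a b] assms(4)[rule_format, of a b]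
      assms(4)[rule_format, of b a]
    by (simp add: q_def mult.commute)
  have "char_inv x \<in> S \<and> i x = char_mult x (i (char_inv x))" if x: "x \<in> S" for x
  proof -
    obtain y where "y \<in> S" "q y = i x" "i y = q x"
      using symmetric_sum_character_products_swap[of S i q, OF finite chars symmetric x] by blast
    then show ?thesis
      using char_inv_eq_if_swapped_quotients[of x "i x" "i y" y] character_nonzero assms(2,3) x
      by (auto simp: q_def)
  qed
  then show ?thesis by blast
qed

end
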